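(* Let $\tilde F:\mathbb C^6\to\mathbb C^6$ be a homogeneous (polynomial, degree $p$) vector field equivariant with respect to the $[4,8]$ representation of $\Gamma=D_4\dot+T^2$. Then there exists an $\mathcal E(2)$-equivariant polynomial vector field $\mathcal F$ of degree $p$ on $E_\kappa$ with $\tilde F=\mathcal F|_{E^c}$ if and only if for every $\theta\in\mathbb R$, $R_\theta\tilde F(\Phi)=\tilde F(R_\theta\Phi)$ for all $\Phi\in E^c$ with $R_\theta\Phi\in E^c$.
   Context: Integers $l_1>l_2>n_2>0$ with $\kappa^2=l_1^2=l_2^2+n_2^2$; $A(\kappa)=\{k:|k|=\kappa\}$, $E_\kappa$ = space of $a:A(\kappa)\to\mathbb C$ with $\sum|a(k)|<\infty$. Wave vectors $q_1=(l_1,0)$, $q_2=(0,l_1)$, $p_1=(l_2,n_2)$, $p_2=(l_2,-n_2)$, $p_3=(n_2,l_2)$, $p_4=(n_2,-l_2)$, $\tilde A=\{\pm q_i,\pm p_j\}$; $E^c\subset E_\kappa$ is the real space of $a$ supported in $\tilde A$ with $a(-k)=\overline{a(k)}$, identified with $\mathbb C^6$ via $z_i=a(q_i)$, $w_j=a(p_j)$. $\mathcal E(2)$ acts by $(\gamma a)(k)=a(\gamma^{-1}k)$ ($\gamma\in O(2)$) and $(T_{s,t}a)(k)=e^{-i(sk_x+tk_y)}a(k)$; $R_\theta$ is counterclockwise rotation; $\Gamma$ is generated by $\gamma_1(x,y)=(-x,y)$, $\gamma_2(x,y)=(y,x)$ and $T_{s,t}$ with $(s,t)\in(\mathbb R/2\pi\mathbb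 Z)^2$, which preserve $E^c$. An $\mathcal E(2)$-equivariant polynomial vector field of degree $p$ on $E_\kappa$ is a map on finitely supported $a$ of the form $\mathcal F(a)(k)=\sum_{k_1,\dots,k_p\in A(\kappa)}P(k,k_1,\dots,k_p)a(k_1)\cdots a(k_p)$ (finitely many nonzero terms) commuting with all of $\mathcal E(2)$. *)

theory Defs
  imports "HOL-Analysis.Analysis"
begin

(* Wave vectors live in the plane R^2 = real^2; a field a : A(kappa) -> C is
   represented as a function real^2 => complex vanishing off A(kappa). *)
type_synonym field = "real^2 \<Rightarrow> complex"

definition circ :: "real \<Rightarrow> (real^2) set" where
  "circ \<kappa> = {k. norm k = \<kappa>}"

definition supp :: "field \<Rightarrow> (real^2) set" where
  "supp a = {k. a k \<noteq> 0}"

definition finsupp :: "real \<Rightarrow> field \<Rightarrow> bool" where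
  "finsupp \<kappa> a \<longleftrightarrow> finite (supp a) \<and> supp a \<subseteq> circ \<kappa>"

definition act :: "(real^2 \<Rightarrow> real^2) \<Rightarrow> field \<Rightarrow> field" where
  "act g a = (\<lambda>k. a (inv g k))"

definition transl :: "real \<Rightarrow> real \<Rightarrow> field \<Rightarrow> field" where
  "transl s t a = (\<lambda>k. exp (- \<i> * complex_of_real (s * k$1 + t * k$2)) * a k)"

definition rot :: "real \<Rightarrow> real^2 \<Rightarrow> real^2" where
  "rot \<theta> k = vector [cos \<theta> * k$1 - sin \<theta> * k$2, sin \<theta> * k$1 + cos \<theta> * k$2]"

definition gamma1 :: "real^2 \<Rightarrow> real^2" where
  "gamma1 k = vector [- k$1, k$2]"

definition gamma2 :: "real^2 \<Rightarrow> real^2" where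
  "gamma2 k = vector [k$2, k$1]"

(* polynomial vector field of degree p on E_kappa (defined on finitely supported a):
   F(a)(k) = sum_{k_1..k_p in A(kappa)} P(k,k_1,..,k_p) a(k_1)...a(k_p);
   for finitely supported a only tuples in supp a contribute. *)
definition poly_vf :: "real \<Rightarrow> nat \<Rightarrow> (field \<Rightarrow> field) \<Rightarrow> bool" where
  "poly_vf \<kappa> p F \<longleftrightarrow> (\<exists>P :: real^2 \<Rightarrow> (real^2) list \<Rightarrow> complex.
     \<forall>a. finsupp \<kappa> a \<longrightarrow>
       F a = (\<lambda>k. if k \<in> circ \<kappa> then
                  (\<Sum>ks\<in>{ks. length ks = p \<and> set ks \<subseteq> supp a}. P k ks * prod_list (map a ks))
                else 0))"

definition E2_equivariant :: "real \<Rightarrow> (field \<Rightarrow> field) \<Rightarrow> bool" where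
  "E2_equivariant \<kappa> F \<longleftrightarrow> (\<forall>a. finsupp \<kappa> a \<longrightarrow>
      (\<forall>g. orthogonal_transformation g \<longrightarrow> F (act g a) = act g (F a)) \<and>
      (\<forall>s t. F (transl s t a) = transl s t (F a)))"

(* the six wave vectors q1 q2 p1 p2 p3 p4 *)
definition wvec :: "int \<Rightarrow> int \<Rightarrow> int \<Rightarrow> 6 \<Rightarrow> real^2" where
  "wvec l1 l2 n2 i =
     (if i = 1 then vector [real_of_int l1, 0]
      else if i = 2 then vector [0, real_of_int l1]
      else if i = 3 then vector [real_of_int l2, real_of_int n2]
      else if i = 4 then vector [real_of_int l2, - real_of_int n2]
      else if i = 5 then vector [real_of_int n2, real_of_int l2]
      else vector [real_of_int n2, - real_of_int l2])"

definition Ec :: "int \<Rightarrow> int \<Rightarrow> int \<Rightarrow> field set" where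
  "Ec l1 l2 n2 = {a. (\<forall>k. a k \<noteq> 0 \<longrightarrow> k \<in> range (wvec l1 l2 n2) \<union> uminus ` range (wvec l1 l2 n2))
                   \<and> (\<forall>k. a (- k) = cnj (a k))}"

(* identification E^c = C^6 : z_i = a(q_i), w_j = a(p_j) *)
definition coords :: "int \<Rightarrow> int \<Rightarrow> int \<Rightarrow> field \<Rightarrow> complex^6" where
  "coords l1 l2 n2 a = (\<chi> i. a (wvec l1 l2 n2 i))"

definition embed :: "int \<Rightarrow> int \<Rightarrow> int \<Rightarrow> complex^6 \<Rightarrow> field" where
  "embed l1 l2 n2 x = (\<lambda>k. \<Sum>i\<in>UNIV.
      (if k = wvec l1 l2 n2 i then x$i else 0) + (if k = - wvec l1 l2 n2 i then cnj (x$i) else 0))"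

(* homogeneous polynomial map of degree p on C^n (as a real space): polynomial in z, conj z *)
definition hom_poly_map :: "nat \<Rightarrow> (complex^'n \<Rightarrow> complex^'n) \<Rightarrow> bool" where
  "hom_poly_map p G \<longleftrightarrow> (\<exists>c :: ('n \<Rightarrow> nat) \<Rightarrow> ('n \<Rightarrow> nat) \<Rightarrow> complex^'n.
     \<forall>x. G x = (\<Sum>(\<alpha>,\<beta>)\<in>{(\<alpha>,\<beta>). (\<Sum>i\<in>UNIV. \<alpha> i) + (\<Sum>i\<in>UNIV. \<beta> i) = p}.
                   (\<Prod>i\<in>UNIV. x$i ^ \<alpha> i * cnj (x$i) ^ \<beta> i) *s c \<alpha> \<beta>))"

(* equivariance w.r.t. the [4,8] representation of Gamma = D4 +. T^2 on C^6 = E^c,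
   i.e. commuting with the generators gamma1, gamma2, T_{s,t} *)
definition Gamma_equivariant :: "int \<Rightarrow> int \<Rightarrow> int \<Rightarrow> (complex^6 \<Rightarrow> complex^6) \<Rightarrow> bool" where
  "Gamma_equivariant l1 l2 n2 G \<longleftrightarrow>
     (\<forall>x. (\<forall>g\<in>{gamma1, gamma2}.
              G (coords l1 l2 n2 (act g (embed l1 l2 n2 x))) = coords l1 l2 n2 (act g (embed l1 l2 n2 (G x))))
          \<and> (\<forall>s t. G (coords l1 l2 n2 (transl s t (embed l1 l2 n2 x)))
                     = coords l1 l2 n2 (transl s t (embed l1 l2 n2 (G x)))))"

end

theory Submission
  imports Defs
begin

(* On E^c every coordinate of Ft is a polynomial in the amplitudes a(k), k in Atilde, and
   its coefficients are unique: a Kronecker substitution reduces this to one polynomial in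
   z and conj z. Indexing monomials by multisets M of wave vectors, Ft becomes a coefficient
   function C(k, M). Every isometry of the plane is a rotation, possibly composed with gamma1,
   so gamma1-equivariance together with the rotation hypothesis gives C(g k, g M) = C(k, M)
   for every isometry g keeping M inside Atilde, while translation equivariance forces
   k = sum M whenever C(k, M) is nonzero. Transporting C along O(2)-orbits (and putting 0 on
   orbits that miss Atilde) gives an O(2)-invariant, momentum-conserving coefficient function
   on the whole circle, and every such function defines an E(2)-equivariant polynomial vector
   field. Conversely, rotations belong to E(2). *)

section \<open>Polynomials in z and conj z\<close>

lemma infinite_unit_circle: "infinite {z::complex. norm z = 1}"
proof
  assume fin: "finite {z::complex. norm z = 1}"
  have "{-1..1::real} \<subseteq> Re ` {z::complex. norm z = 1}"
  proof
    fix x :: real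
    assume "x \<in> {-1..1}"
    then have "1 - x\<^sup>2 \<ge> 0"
      by (simp add: abs_square_le_1 abs_le_iff)
    then have "norm (Complex x (sqrt (1 - x\<^sup>2))) = 1"
      by (simp add: cmod_def)
    then show "x \<in> Re ` {z. norm z = 1}"
      by force
  qed
  moreover have "infinite {-1..1::real}"
    by simp
  ultimately show False
    using fin by (meson finite_imageI finite_subset)
qed

lemma poly_eq_0_if_infinite_roots:
  fixes q :: "'a::idom poly"
  assumes "infinite S" and "\<And>x. x \<in> S \<Longrightarrow> poly q x = 0"
  shows "q = 0"
  using assms poly_roots_finite[of q] finite_subset[of S "{x. poly q x = 0}"] by blast

lemma conj_polyfun_homogeneous_part_eq_0:
  fixes c :: "nat \<times> nat \<Rightarrow> complex"
  assumes fin: "finite D" and zero: "\<And>z. (\<Sum>(a,b)\<in>D. c (a,b) * z^a * cnj z ^ b) = 0"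
  shows "(\<Sum>(a,b)\<in>{(a,b)\<in>D. a + b = n}. c (a,b) * z^a * cnj z ^ b) = 0"
proof -
  define K where "K = n + (\<Sum>(a,b)\<in>D. a + b)"
  have K: "a + b \<le> K" if "(a,b) \<in> D" for a b
    using member_le_sum[OF that, of "\<lambda>(a,b). a + b"] fin by (simp add: K_def)
  define g where "g m = (\<Sum>(a,b)\<in>{(a,b)\<in>D. a + b = m}. c (a,b) * z^a * cnj z ^ b)" for m
  \<comment> \<open>For real t, poly q t is the given polynomial at t * z, graded by total degree.\<close>
  define q where "q = (\<Sum>m\<le>K. monom (g m) m)"
  have q_real_roots: "poly q (of_real t) = 0" for t
  proof -
    have "poly q (of_real t) = (\<Sum>m\<le>K. g m * of_real t ^ m)"
      by (simp add: q_def poly_sum poly_monom)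
    also have "\<dots> = (\<Sum>m\<le>K. \<Sum>(a,b)\<in>{(a,b)\<in>D. a + b = m}. c (a,b) * (of_real t * z)^a * cnj (of_real t * z) ^ b)"
      unfolding g_def sum_distrib_right
      by (intro sum.cong refl) (clarsimp simp: power_mult_distrib power_add mult_ac)
    also have "\<dots> = (\<Sum>(a,b)\<in>D. c (a,b) * (of_real t * z)^a * cnj (of_real t * z) ^ b)"
      using sum.group[OF fin finite_atMost, of "\<lambda>(a,b). a + b" K
          "\<lambda>(a,b). c (a,b) * (of_real t * z)^a * cnj (of_real t * z) ^ b"] K
      by (force simp: case_prod_unfold)
    finally show ?thesis
      using zero[of "of_real t * z"] by simp
  qed
  have "infinite (range (of_real :: real \<Rightarrow> complex))"
    by (metis finite_imageD infinite_UNIV_char_0 inj_of_real)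
  then have "q = 0"
    by (rule poly_eq_0_if_infinite_roots) (auto simp: q_real_roots)
  moreover have "coeff q n = g n"
    by (simp add: q_def K_def coeff_sum)
  ultimately have "g n = 0"
    by simp
  then show ?thesis
    by (simp only: g_def)
qed

lemma unit_circle_monomial:
  fixes \<omega> :: complex
  assumes "norm \<omega> = 1"
  shows "\<omega> ^ (a + b) * (\<omega> ^ a * cnj \<omega> ^ b) = \<omega> ^ (2 * a)"
proof -
  have "\<omega> * cnj \<omega> = 1"
    using assms by (metis complex_norm_square of_real_1 power_one)
  have "\<omega> ^ (a + b) * (\<omega> ^ a * cnj \<omega> ^ b) = \<omega> ^ (2 * a) * (\<omega> * cnj \<omega>) ^ b"
    unfolding mult_2 power_add power_mult_distrib by (simp only: mult_ac)
  also have "\<dots> = \<omega> ^ (2 * a)"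
    using \<open>\<omega> * cnj \<omega> = 1\<close> by simp
  finally show ?thesis .
qed

lemma conj_polyfun_eq_0:
  fixes c :: "nat \<times> nat \<Rightarrow> complex"
  assumes fin: "finite D" and zero: "\<And>z. (\<Sum>(a,b)\<in>D. c (a,b) * z^a * cnj z ^ b) = 0"
    and ab: "(a0, b0) \<in> D"
  shows "c (a0, b0) = 0"
proof -
  define Dn where "Dn = {(a,b)\<in>D. a + b = a0 + b0}"
  have "finite Dn"
    using fin by (rule finite_subset[rotated]) (auto simp: Dn_def)
  \<comment> \<open>For norm \<omega> = 1, poly r \<omega> is \<omega> ^ (a0 + b0) times the homogeneous part of degree
    a0 + b0 at \<omega>.\<close>
  define r where "r = (\<Sum>(a,b)\<in>Dn. monom (c (a,b)) (2 * a))"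
  have "poly r \<omega> = 0" if "norm \<omega> = 1" for \<omega>
  proof -
    have "poly r \<omega> = (\<Sum>(a,b)\<in>Dn. c (a,b) * \<omega> ^ (2 * a))"
      by (simp add: r_def poly_sum poly_monom case_prod_unfold)
    also have "\<dots> = (\<Sum>(a,b)\<in>Dn. \<omega> ^ (a0 + b0) * (c (a,b) * \<omega>^a * cnj \<omega> ^ b))"
    proof (rule sum.cong[OF refl], clarify)
      fix a b
      assume "(a, b) \<in> Dn"
      have "c (a,b) * \<omega> ^ (2 * a) = c (a,b) * (\<omega> ^ (a + b) * (\<omega>^a * cnj \<omega> ^ b))"
        by (simp only: unit_circle_monomial[OF that])
      also have "\<dots> = \<omega> ^ (a0 + b0) * (c (a,b) * \<omega>^a * cnj \<omega> ^ b)"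
        using \<open>(a, b) \<in> Dn\<close> by (simp add: Dn_def mult_ac)
      finally show "c (a,b) * \<omega> ^ (2 * a) = \<omega> ^ (a0 + b0) * (c (a,b) * \<omega>^a * cnj \<omega> ^ b)" .
    qed
    also have "\<dots> = \<omega> ^ (a0 + b0) * (\<Sum>(a,b)\<in>Dn. c (a,b) * \<omega>^a * cnj \<omega> ^ b)"
      by (simp add: sum_distrib_left case_prod_unfold)
    also have "\<dots> = 0"
      using conj_polyfun_homogeneous_part_eq_0[OF fin zero] by (simp add: Dn_def)
    finally show ?thesis .
  qed
  then have "r = 0"
    using infinite_unit_circle by (rule_tac poly_eq_0_if_infinite_roots) auto
  have "coeff r (2 * a0) = (\<Sum>x\<in>Dn. if fst x = a0 then c x else 0)"
    by (auto simp: r_def coeff_sum case_prod_unfold intro!: sum.cong)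
  also have "\<dots> = (\<Sum>x\<in>Dn. if x = (a0, b0) then c x else 0)"
    by (rule sum.cong) (auto simp: Dn_def)
  also have "\<dots> = c (a0, b0)"
    using ab \<open>finite Dn\<close> by (simp add: Dn_def)
  finally show ?thesis
    using \<open>r = 0\<close> by simp
qed

lemma base_expansion_inject:
  fixes d e :: "nat \<Rightarrow> nat"
  assumes "\<forall>j<n. d j < N" and "\<forall>j<n. e j < N"
    and "(\<Sum>j<n. d j * N ^ j) = (\<Sum>j<n. e j * N ^ j)"
  shows "\<forall>j<n. d j = e j"
  using assms
proof (induction n arbitrary: d e)
  case 0
  then show ?case by simp
next
  case (Suc n)
  have expand: "(\<Sum>j<Suc n. f j * N ^ j) = f 0 + N * (\<Sum>j<n. f (Suc j) * N ^ j)" for f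
    unfolding sum.lessThan_Suc_shift by (simp add: sum_distrib_left mult_ac)
  have digits: "d 0 < N" "e 0 < N"
    using Suc.prems(1,2) by blast+
  have eq: "d 0 + N * (\<Sum>j<n. d (Suc j) * N ^ j) = e 0 + N * (\<Sum>j<n. e (Suc j) * N ^ j)"
    using Suc.prems(3) unfolding expand .
  then have "(d 0 + N * (\<Sum>j<n. d (Suc j) * N ^ j)) mod N = (e 0 + N * (\<Sum>j<n. e (Suc j) * N ^ j)) mod N"
    by (rule arg_cong)
  then have head: "d 0 = e 0"
    using digits by simp
  with eq have "(\<Sum>j<n. d (Suc j) * N ^ j) = (\<Sum>j<n. e (Suc j) * N ^ j)"
    using digits by simp
  moreover have "\<forall>j<n. d (Suc j) < N" "\<forall>j<n. e (Suc j) < N"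
    using Suc.prems(1,2) by simp_all
  ultimately have tail: "\<forall>j<n. d (Suc j) = e (Suc j)"
    by (rule Suc.IH[rotated -1])
  show ?case
  proof (intro allI impI)
    fix j
    assume "j < Suc n"
    then show "d j = e j"
      using head tail by (cases j) auto
  qed
qed

lemma kronecker_substitution_inject:
  fixes f :: "'n::finite \<Rightarrow> nat" and \<alpha> \<alpha>' :: "'n \<Rightarrow> nat"
  assumes f: "bij_betw f UNIV {..<m}"
    and bounded: "\<And>i. \<alpha> i < N" "\<And>i. \<alpha>' i < N"
    and eq: "(\<Sum>i\<in>UNIV. \<alpha> i * N ^ f i) = (\<Sum>i\<in>UNIV. \<alpha>' i * N ^ f i)"
  shows "\<alpha> = \<alpha>'"
proof -
  define g where "g = inv_into UNIV f"
  have reindex: "(\<Sum>i\<in>UNIV. h i * N ^ f i) = (\<Sum>j<m. h (g j) * N ^ j)" for h :: "'n \<Rightarrow> nat"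
    using sum.reindex_bij_betw[OF f, of "\<lambda>j. h (g j) * N ^ j"] f
    by (simp add: g_def bij_betw_def)
  have "\<forall>j<m. \<alpha> (g j) = \<alpha>' (g j)"
    using base_expansion_inject[of m "\<lambda>j. \<alpha> (g j)" N "\<lambda>j. \<alpha>' (g j)"] bounded eq
    by (simp add: reindex)
  moreover have "f i < m" and "g (f i) = i" for i
    using f by (auto simp: g_def bij_betw_def)
  ultimately show ?thesis
    by (metis ext)
qed

lemma multi_conj_polyfun_eq_0:
  fixes c :: "('n::finite \<Rightarrow> nat) \<times> ('n \<Rightarrow> nat) \<Rightarrow> complex"
  assumes fin: "finite D"
    and zero: "\<And>x. (\<Sum>(\<alpha>,\<beta>)\<in>D. c (\<alpha>,\<beta>) * (\<Prod>i\<in>UNIV. x i ^ \<alpha> i * cnj (x i) ^ \<beta> i)) = 0"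
    and mem: "(\<alpha>0, \<beta>0) \<in> D"
  shows "c (\<alpha>0, \<beta>0) = 0"
proof -
  define N where "N = Suc (\<Sum>(\<alpha>,\<beta>)\<in>D. sum \<alpha> UNIV + sum \<beta> UNIV)"
  have bounded: "\<alpha> i < N \<and> \<beta> i < N" if "(\<alpha>, \<beta>) \<in> D" for \<alpha> \<beta> i
  proof -
    have "\<alpha> i \<le> sum \<alpha> UNIV" "\<beta> i \<le> sum \<beta> UNIV"
      by (simp_all add: member_le_sum)
    moreover have "sum \<alpha> UNIV + sum \<beta> UNIV \<le> (\<Sum>(\<alpha>,\<beta>)\<in>D. sum \<alpha> UNIV + sum \<beta> UNIV)"
      using member_le_sum[OF that, of "\<lambda>(\<alpha>,\<beta>). sum \<alpha> UNIV + sum \<beta> UNIV"] fin by simp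
    ultimately show ?thesis
      by (simp add: N_def)
  qed
  obtain f :: "'n \<Rightarrow> nat" and m where f: "bij_betw f UNIV {..<m}"
    using ex_bij_betw_finite_nat[of "UNIV :: 'n set"] by (auto simp: atLeast0LessThan)
  \<comment> \<open>Substituting x i = z ^ N ^ f i turns the monomials into distinct monomials in z and
    conj z, since all exponents are base-N digits.\<close>
  define enc where "enc \<alpha> = (\<Sum>i\<in>UNIV. \<alpha> i * N ^ f i)" for \<alpha> :: "'n \<Rightarrow> nat"
  define encp where "encp = (\<lambda>(\<alpha>,\<beta>). (enc \<alpha>, enc \<beta>))"
  have "inj_on encp D"
  proof (rule inj_onI, clarify)
    fix \<alpha> \<beta> \<alpha>' \<beta>'
    assume D: "(\<alpha>, \<beta>) \<in> D" "(\<alpha>', \<beta>') \<in> D" and "encp (\<alpha>, \<beta>) = encp (\<alpha>', \<beta>')"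
    then have "enc \<alpha> = enc \<alpha>'" and "enc \<beta> = enc \<beta>'"
      by (simp_all add: encp_def)
    then show "\<alpha> = \<alpha>' \<and> \<beta> = \<beta>'"
      using bounded[OF D(1)] bounded[OF D(2)] unfolding enc_def
      by (metis kronecker_substitution_inject[OF f])
  qed
  have subst: "(\<Prod>i\<in>UNIV. (z ^ N ^ f i) ^ \<alpha> i * (cnj z ^ N ^ f i) ^ \<beta> i) = z ^ enc \<alpha> * cnj z ^ enc \<beta>"
    for z :: complex and \<alpha> \<beta>
    by (simp add: enc_def prod.distrib power_sum power_mult[symmetric] mult.commute)
  define c' where "c' = c \<circ> the_inv_into D encp"
  have c': "c' (encp x) = c x" if "x \<in> D" for x
    using that \<open>inj_on encp D\<close> by (simp add: c'_def the_inv_into_f_f)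
  have encoded_zero: "(\<Sum>(a,b)\<in>encp ` D. c' (a,b) * z ^ a * cnj z ^ b) = 0" for z :: complex
  proof -
    have "(\<Sum>(a,b)\<in>encp ` D. c' (a,b) * z ^ a * cnj z ^ b)
        = (\<Sum>x\<in>D. (\<lambda>(a,b). c' (a,b) * z ^ a * cnj z ^ b) (encp x))"
      by (rule sum.reindex[OF \<open>inj_on encp D\<close>, unfolded comp_def])
    also have "\<dots> = (\<Sum>(\<alpha>,\<beta>)\<in>D. c (\<alpha>,\<beta>) * (\<Prod>i\<in>UNIV. (z ^ N ^ f i) ^ \<alpha> i * cnj (z ^ N ^ f i) ^ \<beta> i))"
    proof (rule sum.cong[OF refl], clarify)
      fix \<alpha> \<beta>
      assume "(\<alpha>, \<beta>) \<in> D"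
      then show "(\<lambda>(a,b). c' (a,b) * z ^ a * cnj z ^ b) (encp (\<alpha>, \<beta>))
          = c (\<alpha>,\<beta>) * (\<Prod>i\<in>UNIV. (z ^ N ^ f i) ^ \<alpha> i * cnj (z ^ N ^ f i) ^ \<beta> i)"
        using c'[of "(\<alpha>, \<beta>)"] by (simp add: subst encp_def mult.assoc)
    qed
    also have "\<dots> = 0"
      by (rule zero)
    finally show ?thesis .
  qed
  have "c' (encp (\<alpha>0, \<beta>0)) = 0"
    unfolding encp_def prod.case by (rule conj_polyfun_eq_0[OF _ encoded_zero]) (use fin mem in \<open>auto simp: encp_def\<close>)
  then show ?thesis
    using c'[OF mem] by simp
qed

section \<open>Isometries of the plane\<close>

lemma vec2_eq_iff: "(x::real^2) = y \<longleftrightarrow> x$1 = y$1 \<and> x$2 = y$2"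
  by (simp add: vec_eq_iff forall_2)

lemma norm_vec2: "norm (x::real^2) = sqrt ((x$1)\<^sup>2 + (x$2)\<^sup>2)"
  by (simp add: norm_eq_sqrt_inner inner_vec_def sum_2 power2_eq_square)

lemma inner_vec2: "(x::real^2) \<bullet> y = x$1 * y$1 + x$2 * y$2"
  by (simp add: inner_vec_def sum_2)

lemma rot_nth [simp]:
  "rot \<theta> x $ 1 = cos \<theta> * x$1 - sin \<theta> * x$2"
  "rot \<theta> x $ 2 = sin \<theta> * x$1 + cos \<theta> * x$2"
  by (simp_all add: rot_def)

lemma gamma1_nth [simp]: "gamma1 x $ 1 = - x$1" "gamma1 x $ 2 = x$2"
  by (simp_all add: gamma1_def)

lemma rot_uminus [simp]: "rot \<theta> (- x) = - rot \<theta> x"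
  by (simp add: vec2_eq_iff)

lemma gamma1_uminus [simp]: "gamma1 (- x) = - gamma1 x"
  by (simp add: vec2_eq_iff)

lemma orthogonal_transformation_rot: "orthogonal_transformation (rot \<theta>)"
proof -
  have "linear (rot \<theta>)"
    by (rule linearI) (simp_all add: vec2_eq_iff algebra_simps)
  moreover have "norm (rot \<theta> x) = norm x" for x
  proof -
    have "(rot \<theta> x $ 1)\<^sup>2 + (rot \<theta> x $ 2)\<^sup>2 = ((x$1)\<^sup>2 + (x$2)\<^sup>2) * ((sin \<theta>)\<^sup>2 + (cos \<theta>)\<^sup>2)"
      unfolding rot_nth by algebra
    then show ?thesis
      by (simp add: norm_vec2)
  qed
  ultimately show ?thesis
    by (simp add: orthogonal_transformation)
qed

lemma orthogonal_transformation_gamma1: "orthogonal_transformation gamma1"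
proof -
  have "linear gamma1"
    by (rule linearI) (simp_all add: vec2_eq_iff)
  then show ?thesis
    by (simp add: orthogonal_transformation norm_vec2)
qed

lemma unit_vector_orthogonal_cases:
  fixes v :: "real^2"
  assumes orth: "cos \<theta> * v$1 + sin \<theta> * v$2 = 0" and unit: "(v$1)\<^sup>2 + (v$2)\<^sup>2 = 1"
  shows "v = vector [- sin \<theta>, cos \<theta>] \<or> v = vector [sin \<theta>, - cos \<theta>]"
proof -
  define lam where "lam = v$2 * cos \<theta> - v$1 * sin \<theta>"
  have "v$1 = cos \<theta> * (cos \<theta> * v$1 + sin \<theta> * v$2) - lam * sin \<theta>"
    unfolding lam_def using sin_cos_squared_add[of \<theta>] by algebra
  moreover have "v$2 = sin \<theta> * (cos \<theta> * v$1 + sin \<theta> * v$2) + lam * cos \<theta>"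
    unfolding lam_def using sin_cos_squared_add[of \<theta>] by algebra
  ultimately have v: "v$1 = - lam * sin \<theta>" "v$2 = lam * cos \<theta>"
    unfolding orth by simp_all
  then have "lam\<^sup>2 = 1"
    using unit sin_cos_squared_add[of \<theta>] by algebra
  then have "lam = 1 \<or> lam = -1"
    by (simp add: power2_eq_1_iff)
  then show ?thesis
    using v by (auto simp: vec2_eq_iff)
qed

lemma orthogonal_transformation_plane_cases:
  fixes h :: "real^2 \<Rightarrow> real^2"
  assumes h: "orthogonal_transformation h"
  obtains \<theta> where "h = rot \<theta>" | \<theta> where "h = rot \<theta> \<circ> gamma1"
proof -
  define u where "u = h (vector [1, 0])"
  define v where "v = h (vector [0, 1])"
  have lin: "linear h"
    using h by (rule orthogonal_transformation_linear)
  have h_expand: "h x = x$1 *\<^sub>R u + x$2 *\<^sub>R v" for x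
  proof -
    have "h (x$1 *\<^sub>R vector [1, 0] + x$2 *\<^sub>R vector [0, 1]) = x$1 *\<^sub>R u + x$2 *\<^sub>R v"
      by (simp add: linear_add[OF lin] linear_scale[OF lin] u_def v_def)
    moreover have "x$1 *\<^sub>R vector [1, 0] + x$2 *\<^sub>R vector [0, 1] = x"
      by (simp add: vec2_eq_iff)
    ultimately show ?thesis
      by simp
  qed
  have uu: "(u$1)\<^sup>2 + (u$2)\<^sup>2 = 1" and vv: "(v$1)\<^sup>2 + (v$2)\<^sup>2 = 1"
    and uv: "u$1 * v$1 + u$2 * v$2 = 0"
    using h by (simp_all add: orthogonal_transformation_def u_def v_def inner_vec2 power2_eq_square)
  obtain \<theta> where u: "u$1 = cos \<theta>" "u$2 = sin \<theta>"
    using sincos_total_2pi[OF uu] by metis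
  have "cos \<theta> * v$1 + sin \<theta> * v$2 = 0"
    using uv by (simp add: u)
  from unit_vector_orthogonal_cases[OF this vv]
  consider "v = vector [- sin \<theta>, cos \<theta>]" | "v = vector [sin \<theta>, - cos \<theta>]"
    by blast
  then show ?thesis
  proof cases
    case 1
    then have "h = rot \<theta>"
      by (auto simp: fun_eq_iff h_expand u vec2_eq_iff algebra_simps)
    then show ?thesis
      by (rule that(1))
  next
    case 2
    then have "h = rot (\<theta> + pi) \<circ> gamma1"
      by (auto simp: fun_eq_iff h_expand u vec2_eq_iff algebra_simps)
    then show ?thesis
      by (rule that(2))
  qed
qed

section \<open>Plane waves and monomials in a field\<close>

definition plane_wave :: "real \<Rightarrow> real \<Rightarrow> real^2 \<Rightarrow> complex" where
  "plane_wave s t k = exp (- \<i> * complex_of_real (s * k$1 + t * k$2))"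

lemma transl_apply: "transl s t a k = plane_wave s t k * a k"
  by (simp add: transl_def plane_wave_def)

lemma plane_wave_0 [simp]: "plane_wave s t 0 = 1"
  by (simp add: plane_wave_def)

lemma plane_wave_add: "plane_wave s t (x + y) = plane_wave s t x * plane_wave s t y"
  by (simp add: plane_wave_def algebra_simps exp_add[symmetric])

lemma plane_wave_uminus: "plane_wave s t (- x) = cnj (plane_wave s t x)"
proof -
  have "plane_wave s t (- x) = exp (\<i> * complex_of_real (s * x$1 + t * x$2))"
    by (simp add: plane_wave_def algebra_simps)
  also have "\<dots> = cnj (plane_wave s t x)"
    by (simp add: plane_wave_def exp_cnj)
  finally show ?thesis .
qed

lemma plane_wave_nonzero [simp]: "plane_wave s t x \<noteq> 0"
  by (simp add: plane_wave_def)

lemma plane_wave_inject: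
  assumes "\<And>s t. plane_wave s t x = plane_wave s t y"
  shows "x = y"
proof (rule ccontr)
  define d where "d = x - y"
  assume "x \<noteq> y"
  define n where "n = (d$1)\<^sup>2 + (d$2)\<^sup>2"
  have "n \<noteq> 0"
    using \<open>x \<noteq> y\<close> by (simp add: n_def d_def vec2_eq_iff)
  define s where "s = pi * d$1 / n"
  define t where "t = pi * d$2 / n"
  have "s * d$1 + t * d$2 = pi * n / n"
    by (simp add: s_def t_def n_def power2_eq_square add_divide_distrib algebra_simps)
  then have "s * d$1 + t * d$2 = pi"
    using \<open>n \<noteq> 0\<close> by simp
  then have "plane_wave s t d = -1"
    by (simp add: plane_wave_def exp_minus)
  moreover have "plane_wave s t x = plane_wave s t d * plane_wave s t y"
    using plane_wave_add[of s t d y] by (simp add: d_def)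
  ultimately show False
    using assms[of s t] by simp
qed

lemma supp_act: "bij g \<Longrightarrow> supp (act g a) = g ` supp a"
  by (simp add: supp_def act_def bij_image_Collect_eq)

lemma supp_transl [simp]: "supp (transl s t a) = supp a"
  by (simp add: supp_def transl_apply)

definition msets_in :: "'a set \<Rightarrow> nat \<Rightarrow> 'a multiset set" where
  "msets_in S p = {M. set_mset M \<subseteq> S \<and> size M = p}"

lemma finite_msets_in:
  assumes "finite S"
  shows "finite (msets_in S p)"
proof -
  have "msets_in S p \<subseteq> mset ` {xs. set xs \<subseteq> S \<and> length xs = p}"
    by (auto simp: msets_in_def image_iff) (metis ex_mset set_mset_mset size_mset)
  then show ?thesis
    by (rule finite_subset) (simp add: finite_lists_length_eq[OF assms])
qed

definition monomial :: "field \<Rightarrow> (real^2) multiset \<Rightarrow> complex" where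
  "monomial a M = prod_mset (image_mset a M)"

lemma monomial_eq_0: "\<not> set_mset M \<subseteq> supp a \<Longrightarrow> monomial a M = 0"
  by (auto simp: monomial_def supp_def)

lemma monomial_act: "monomial (act g a) M = monomial a (image_mset (inv g) M)"
  by (simp add: monomial_def act_def multiset.map_comp comp_def)

lemma monomial_transl: "monomial (transl s t a) M = plane_wave s t (sum_mset M) * monomial a M"
  by (induction M) (auto simp: monomial_def transl_apply plane_wave_add)

lemma monomial_restrict:
  "monomial (\<lambda>k. if k \<in> T then a k else 0) M = (if set_mset M \<subseteq> T then monomial a M else 0)"
  by (induction M) (auto simp: monomial_def)

lemma monomial_mset: "monomial a (mset ks) = prod_list (map a ks)"
  by (induction ks) (simp_all add: monomial_def)

lemma monomial_sum: "finite I \<Longrightarrow> monomial a (\<Sum>i\<in>I. F i) = (\<Prod>i\<in>I. monomial a (F i))"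
  by (induction I rule: finite_induct) (simp_all add: monomial_def)

section \<open>Vector fields defined by coefficient functions\<close>

type_synonym coeffs = "real^2 \<Rightarrow> (real^2) multiset \<Rightarrow> complex"

definition poly_of_coeffs :: "nat \<Rightarrow> coeffs \<Rightarrow> field \<Rightarrow> field" where
  "poly_of_coeffs p C a = (\<lambda>k. \<Sum>M\<in>msets_in (supp a) p. C k M * monomial a M)"

definition vf_of_coeffs :: "real \<Rightarrow> nat \<Rightarrow> coeffs \<Rightarrow> field \<Rightarrow> field" where
  "vf_of_coeffs \<kappa> p C a = (\<lambda>k. if k \<in> circ \<kappa> then poly_of_coeffs p C a k else 0)"

lemma sum_monomials_supp_subset:
  assumes "finite S" and "supp a \<subseteq> S"
  shows "(\<Sum>M\<in>msets_in (supp a) p. f M * monomial a M) = (\<Sum>M\<in>msets_in S p. f M * monomial a M)"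
proof (rule sum.mono_neutral_left[OF finite_msets_in[OF assms(1)]])
  show "msets_in (supp a) p \<subseteq> msets_in S p"
    using assms(2) by (auto simp: msets_in_def)
  show "\<forall>M\<in>msets_in S p - msets_in (supp a) p. f M * monomial a M = 0"
    using monomial_eq_0 by (fastforce simp: msets_in_def)
qed

lemma sum_monomials_act:
  assumes "bij g"
  shows "(\<Sum>M\<in>msets_in (supp (act g a)) p. f M * monomial (act g a) M)
    = (\<Sum>M\<in>msets_in (supp a) p. f (image_mset g M) * monomial a M)"
proof (rule sum.reindex_bij_witness[where i = "image_mset g" and j = "image_mset (inv g)"])
  have g_inv: "g (inv g x) = x" and inv_g: "inv g (g x) = x" for x
    using assms by (simp_all add: bij_is_inj bij_is_surj surj_f_inv_f)
  fix M
  show "image_mset g (image_mset (inv g) M) = M" and "image_mset (inv g) (image_mset g M) = M"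
    by (simp_all add: multiset.map_comp comp_def g_inv inv_g)
  show "image_mset (inv g) M \<in> msets_in (supp a) p" if "M \<in> msets_in (supp (act g a)) p"
    using that assms by (auto simp: msets_in_def supp_act inv_g)
  show "image_mset g M \<in> msets_in (supp (act g a)) p" if "M \<in> msets_in (supp a) p"
    using that assms by (auto simp: msets_in_def supp_act)
  show "f (image_mset g (image_mset (inv g) M)) * monomial a (image_mset (inv g) M)
      = f M * monomial (act g a) M"
    by (simp add: monomial_act multiset.map_comp comp_def g_inv)
qed

lemma sum_monomials_transl:
  "(\<Sum>M\<in>msets_in (supp (transl s t a)) p. f M * monomial (transl s t a) M)
     = (\<Sum>M\<in>msets_in (supp a) p. f M * plane_wave s t (sum_mset M) * monomial a M)"
  by (simp add: monomial_transl mult.assoc)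

definition O2_invariant_on :: "(real^2) multiset set \<Rightarrow> coeffs \<Rightarrow> bool" where
  "O2_invariant_on D C \<longleftrightarrow> (\<forall>g k M. orthogonal_transformation g \<longrightarrow> M \<in> D \<longrightarrow>
     image_mset g M \<in> D \<longrightarrow> C (g k) (image_mset g M) = C k M)"

definition momentum_conserving_on :: "(real^2) multiset set \<Rightarrow> coeffs \<Rightarrow> bool" where
  "momentum_conserving_on D C \<longleftrightarrow> (\<forall>k M. M \<in> D \<longrightarrow> C k M \<noteq> 0 \<longrightarrow> sum_mset M = k)"

lemma poly_vf_vf_of_coeffs: "poly_vf \<kappa> p (vf_of_coeffs \<kappa> p C)"
proof -
  define canon :: "(real^2) multiset \<Rightarrow> (real^2) list" where "canon M = (SOME xs. mset xs = M)" for M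
  have mset_canon [simp]: "mset (canon M) = M" for M
    unfolding canon_def by (rule someI_ex) (rule ex_mset)
  have set_canon [simp]: "set (canon M) = set_mset M" and length_canon [simp]: "length (canon M) = size M" for M
    by (metis mset_canon set_mset_mset, metis mset_canon size_mset)
  define P where "P k ks = (if ks = canon (mset ks) then C k (mset ks) else 0)" for k ks
  \<comment> \<open>Each multiset is counted once, through its chosen enumeration.\<close>
  have "poly_of_coeffs p C a k = (\<Sum>ks\<in>{ks. length ks = p \<and> set ks \<subseteq> supp a}. P k ks * prod_list (map a ks))"
    if "finite (supp a)" for a k
  proof -
    let ?L = "{ks. length ks = p \<and> set ks \<subseteq> supp a}"
    have "finite ?L"
      using finite_lists_length_eq[OF that, of p] by (simp add: conj_commute)
    have canon_image: "{ks \<in> ?L. ks = canon (mset ks)} = canon ` msets_in (supp a) p"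
      by (auto simp: msets_in_def)
    have "(\<Sum>ks\<in>?L. P k ks * prod_list (map a ks))
        = (\<Sum>ks\<in>?L. if ks = canon (mset ks) then C k (mset ks) * monomial a (mset ks) else 0)"
      by (rule sum.cong) (simp_all add: P_def monomial_mset)
    also have "\<dots> = (\<Sum>ks\<in>{ks \<in> ?L. ks = canon (mset ks)}. C k (mset ks) * monomial a (mset ks))"
      by (rule sum.inter_filter[OF \<open>finite ?L\<close>, symmetric])
    also have "\<dots> = poly_of_coeffs p C a k"
      unfolding canon_image poly_of_coeffs_def
      by (subst sum.reindex) (auto intro: inj_on_inverseI[of _ mset])
    finally show ?thesis ..
  qed
  then show ?thesis
    unfolding poly_vf_def vf_of_coeffs_def finsupp_def by (auto intro!: exI[of _ P])
qed

lemma E2_equivariant_vf_of_coeffs: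
  assumes inv: "O2_invariant_on UNIV C" and mom: "momentum_conserving_on UNIV C"
  shows "E2_equivariant \<kappa> (vf_of_coeffs \<kappa> p C)"
proof -
  have "vf_of_coeffs \<kappa> p C (act g a) = act g (vf_of_coeffs \<kappa> p C a)" if g: "orthogonal_transformation g" for g a
  proof
    fix k
    have "C k (image_mset g M) = C (inv g k) M" for M
      using inv g orthogonal_transformation_surj[OF g]
      by (metis O2_invariant_on_def UNIV_I surj_f_inv_f)
    then have "poly_of_coeffs p C (act g a) k = poly_of_coeffs p C a (inv g k)"
      unfolding poly_of_coeffs_def sum_monomials_act[OF orthogonal_transformation_bij[OF g]] by simp
    moreover have "inv g k \<in> circ \<kappa> \<longleftrightarrow> k \<in> circ \<kappa>"
      using orthogonal_transformation_norm[OF orthogonal_transformation_inv[OF g]] by (simp add: circ_def)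
    ultimately show "vf_of_coeffs \<kappa> p C (act g a) k = act g (vf_of_coeffs \<kappa> p C a) k"
      by (simp add: vf_of_coeffs_def act_def)
  qed
  moreover have "vf_of_coeffs \<kappa> p C (transl s t a) = transl s t (vf_of_coeffs \<kappa> p C a)" for s t a
  proof
    fix k
    have resonant: "C k M * plane_wave s t (sum_mset M) * monomial a M = plane_wave s t k * (C k M * monomial a M)" for M
      using mom by (cases "C k M = 0") (auto simp: momentum_conserving_on_def)
    have "poly_of_coeffs p C (transl s t a) k
        = (\<Sum>M\<in>msets_in (supp a) p. plane_wave s t k * (C k M * monomial a M))"
      unfolding poly_of_coeffs_def sum_monomials_transl resonant ..
    also have "\<dots> = plane_wave s t k * poly_of_coeffs p C a k"
      by (simp add: poly_of_coeffs_def sum_distrib_left)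
    finally have "poly_of_coeffs p C (transl s t a) k = plane_wave s t k * poly_of_coeffs p C a k" .
    then show "vf_of_coeffs \<kappa> p C (transl s t a) k = transl s t (vf_of_coeffs \<kappa> p C a) k"
      by (simp add: vf_of_coeffs_def transl_apply)
  qed
  ultimately show ?thesis
    by (simp add: E2_equivariant_def)
qed

section \<open>Extension of coefficients along O(2)-orbits\<close>

lemma linear_sum_mset: "linear g \<Longrightarrow> g (sum_mset M) = sum_mset (image_mset g M)"
  by (induction M) (simp_all add: linear_add linear_0)

definition orbit_extension :: "(real^2) multiset set \<Rightarrow> coeffs \<Rightarrow> coeffs" where
  "orbit_extension D C k M =
     (if \<exists>g. orthogonal_transformation g \<and> image_mset g M \<in> D
      then (let g = SOME g. orthogonal_transformation g \<and> image_mset g M \<in> D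
            in C (g k) (image_mset g M))
      else 0)"

lemma orbit_extension_eq:
  assumes inv: "O2_invariant_on D C"
    and g: "orthogonal_transformation g" and gM: "image_mset g M \<in> D"
  shows "orbit_extension D C k M = C (g k) (image_mset g M)"
proof -
  define g0 where "g0 = (SOME g. orthogonal_transformation g \<and> image_mset g M \<in> D)"
  have g0: "orthogonal_transformation g0" "image_mset g0 M \<in> D"
    using someI[of "\<lambda>g. orthogonal_transformation g \<and> image_mset g M \<in> D", OF conjI[OF g gM]]
    by (simp_all add: g0_def)
  define q where "q = g \<circ> inv g0"
  have "orthogonal_transformation q"
    unfolding q_def using g g0(1) by (intro orthogonal_transformation_compose orthogonal_transformation_inv)
  moreover have "q (g0 x) = g x" for x
    using orthogonal_transformation_inj[OF g0(1)] by (simp add: q_def)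
  ultimately have "C (g k) (image_mset g M) = C (g0 k) (image_mset g0 M)"
    using inv g0(2) gM unfolding O2_invariant_on_def
    by (metis (no_types, lifting) comp_apply image_mset_cong multiset.map_comp)
  then show ?thesis
    using g gM by (auto simp: orbit_extension_def g0_def Let_def)
qed

lemma orbit_extension_on:
  "O2_invariant_on D C \<Longrightarrow> M \<in> D \<Longrightarrow> orbit_extension D C k M = C k M"
  using orbit_extension_eq[of D C "\<lambda>x. x"] by simp

lemma O2_invariant_orbit_extension:
  assumes inv: "O2_invariant_on D C"
  shows "O2_invariant_on UNIV (orbit_extension D C)"
  unfolding O2_invariant_on_def
proof (intro allI impI)
  fix h :: "real^2 \<Rightarrow> real^2" and k M
  assume h: "orthogonal_transformation h"
  have hh: "inv h (h x) = x" for x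
    using orthogonal_transformation_inj[OF h] by simp
  show "orbit_extension D C (h k) (image_mset h M) = orbit_extension D C k M"
  proof (cases "\<exists>g. orthogonal_transformation g \<and> image_mset g M \<in> D")
    case True
    then obtain g where g: "orthogonal_transformation g" "image_mset g M \<in> D"
      by blast
    have "orthogonal_transformation (g \<circ> inv h)"
      using g(1) h by (intro orthogonal_transformation_compose orthogonal_transformation_inv)
    moreover have "image_mset (g \<circ> inv h) (image_mset h M) = image_mset g M"
      by (simp add: multiset.map_comp comp_def hh)
    ultimately have "orbit_extension D C (h k) (image_mset h M) = C (g k) (image_mset g M)"
      using orbit_extension_eq[OF inv, of "g \<circ> inv h" "image_mset h M" "h k"] g(2) by (simp add: hh)
    also have "\<dots> = orbit_extension D C k M"
      using orbit_extension_eq[OF inv g] by simp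
    finally show ?thesis .
  next
    case False
    then have "\<not> (\<exists>g. orthogonal_transformation g \<and> image_mset g (image_mset h M) \<in> D)"
      using h by (metis multiset.map_comp orthogonal_transformation_compose)
    then have "orbit_extension D C (h k) (image_mset h M) = 0"
      unfolding orbit_extension_def by (rule if_not_P)
    moreover have "orbit_extension D C k M = 0"
      unfolding orbit_extension_def using False by (rule if_not_P)
    ultimately show ?thesis
      by simp
  qed
qed

lemma momentum_conserving_orbit_extension:
  assumes inv: "O2_invariant_on D C" and mom: "momentum_conserving_on D C"
  shows "momentum_conserving_on UNIV (orbit_extension D C)"
  unfolding momentum_conserving_on_def
proof (intro allI impI)
  fix k M
  assume nz: "orbit_extension D C k M \<noteq> 0"
  then obtain g where g: "orthogonal_transformation g" "image_mset g M \<in> D"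
    by (auto simp: orbit_extension_def split: if_splits)
  then have "C (g k) (image_mset g M) \<noteq> 0"
    using nz orbit_extension_eq[OF inv g] by simp
  then have "g (sum_mset M) = g k"
    using mom g(2) linear_sum_mset[OF orthogonal_transformation_linear[OF g(1)]]
    by (simp add: momentum_conserving_on_def)
  then show "sum_mset M = k"
    using orthogonal_transformation_inj[OF g(1)] by (simp add: inj_eq)
qed

section \<open>The wave vectors of E^c\<close>

lemma exhaust_6: "(x::6) = 0 \<or> x = 1 \<or> x = 2 \<or> x = 3 \<or> x = 4 \<or> x = 5"
proof (induct x)
  case (of_int z)
  then have "z = 0 \<or> z = 1 \<or> z = 2 \<or> z = 3 \<or> z = 4 \<or> z = 5"
    by fastforce
  then show ?case
    by auto
qed

definition exps_of_degree :: "nat \<Rightarrow> (('n \<Rightarrow> nat) \<times> ('n \<Rightarrow> nat)) set" where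
  "exps_of_degree p = {(\<alpha>, \<beta>). (\<Sum>i\<in>UNIV. \<alpha> i) + (\<Sum>i\<in>UNIV. \<beta> i) = p}"

locale wave_vectors =
  fixes l1 l2 n2 :: int
  assumes l1_gt_l2: "l1 > l2" and l2_gt_n2: "l2 > n2" and n2_pos: "n2 > 0"
    and pythagorean: "l1\<^sup>2 = l2\<^sup>2 + n2\<^sup>2"
begin

abbreviation w :: "6 \<Rightarrow> real^2" where "w \<equiv> wvec l1 l2 n2"
abbreviation emb :: "complex^6 \<Rightarrow> field" where "emb \<equiv> embed l1 l2 n2"
abbreviation crd :: "field \<Rightarrow> complex^6" where "crd \<equiv> coords l1 l2 n2"

definition Atilde :: "(real^2) set" where
  "Atilde = range w \<union> uminus ` range w"

text \<open>In the numeral type 6 the index 0 is the sixth wave vector, p4.\<close>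

lemma wvec_values:
  "w 1 = vector [real_of_int l1, 0]" "w 2 = vector [0, real_of_int l1]"
  "w 3 = vector [real_of_int l2, real_of_int n2]" "w 4 = vector [real_of_int l2, - real_of_int n2]"
  "w 5 = vector [real_of_int n2, real_of_int l2]" "w 0 = vector [real_of_int n2, - real_of_int l2]"
  by (simp_all add: wvec_def)

lemma wvec_eq_iff [simp]: "w i = w j \<longleftrightarrow> i = j"
  using exhaust_6[of i] exhaust_6[of j] l1_gt_l2 l2_gt_n2 n2_pos
  by (auto simp: wvec_values vec2_eq_iff)

lemma wvec_neq_uminus [simp]: "w i \<noteq> - w j" "- w i \<noteq> w j"
  using exhaust_6[of i] exhaust_6[of j] l1_gt_l2 l2_gt_n2 n2_pos
  by (auto simp: wvec_values vec2_eq_iff)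

lemma inj_wvec: "inj w"
  by (simp add: inj_def)

lemma norm_wvec: "norm (w i) = real_of_int l1"
proof -
  have "(real_of_int l2)\<^sup>2 + (real_of_int n2)\<^sup>2 = (real_of_int l1)\<^sup>2"
    using pythagorean by (metis of_int_add of_int_power)
  moreover have "l1 > 0"
    using l1_gt_l2 l2_gt_n2 n2_pos by simp
  ultimately show ?thesis
    using exhaust_6[of i] by (auto simp: wvec_values norm_vec2 add.commute)
qed

lemma finite_Atilde: "finite Atilde"
  by (simp add: Atilde_def)

lemma Atilde_subset_circ: "Atilde \<subseteq> circ (real_of_int l1)"
  by (auto simp: Atilde_def circ_def norm_wvec)

lemma uminus_in_Atilde [simp]: "- x \<in> Atilde \<longleftrightarrow> x \<in> Atilde"
proof -
  have "- y \<in> Atilde" if "y \<in> Atilde" for y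
    using that by (auto simp: Atilde_def)
  then show ?thesis
    by (metis minus_minus)
qed

lemma Atilde_cases:
  assumes "k \<in> Atilde"
  obtains j where "k = w j" | j where "k = - w j"
  using assms by (auto simp: Atilde_def)

lemma gamma1_in_Atilde:
  assumes "x \<in> Atilde"
  shows "gamma1 x \<in> Atilde"
proof -
  have "gamma1 (w 0) = - w 5" "gamma1 (w 1) = - w 1" "gamma1 (w 2) = w 2"
    "gamma1 (w 3) = - w 4" "gamma1 (w 4) = - w 3" "gamma1 (w 5) = - w 0"
    by (simp_all add: vec2_eq_iff wvec_values)
  then have "gamma1 (w j) \<in> Atilde" for j
    using exhaust_6[of j] by (auto simp: Atilde_def)
  with assms show ?thesis
    by (cases rule: Atilde_cases) simp_all
qed

lemma embed_wvec [simp]: "emb x (w j) = x$j"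
  by (simp add: embed_def eq_commute[of "w j"])

lemma embed_uminus_wvec [simp]: "emb x (- w j) = cnj (x$j)"
  by (simp add: embed_def)

lemma embed_outside: "k \<notin> Atilde \<Longrightarrow> emb x k = 0"
  by (auto simp: embed_def Atilde_def intro!: sum.neutral)

lemma embed_in_Ec: "emb x \<in> Ec l1 l2 n2"
proof -
  have "emb x (- k) = cnj (emb x k)" for k
    by (cases "k \<in> Atilde") (auto elim: Atilde_cases simp: embed_outside)
  moreover have "k \<in> range w \<union> uminus ` range w" if "emb x k \<noteq> 0" for k
    using that embed_outside[of k x] by (auto simp: Atilde_def)
  ultimately show ?thesis
    by (simp add: Ec_def)
qed

lemma coords_embed [simp]: "crd (emb x) = x"
  by (simp add: coords_def vec_eq_iff)

lemma Ec_uminus: "\<Phi> \<in> Ec l1 l2 n2 \<Longrightarrow> \<Phi> (- k) = cnj (\<Phi> k)"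
  by (simp add: Ec_def)

lemma Ec_outside: "\<Phi> \<in> Ec l1 l2 n2 \<Longrightarrow> k \<notin> Atilde \<Longrightarrow> \<Phi> k = 0"
  by (auto simp: Ec_def Atilde_def)

lemma supp_Ec: "\<Phi> \<in> Ec l1 l2 n2 \<Longrightarrow> supp \<Phi> \<subseteq> Atilde"
  using Ec_outside by (auto simp: supp_def)

lemma embed_coords:
  assumes "\<Phi> \<in> Ec l1 l2 n2"
  shows "emb (crd \<Phi>) = \<Phi>"
proof
  fix k
  show "emb (crd \<Phi>) k = \<Phi> k"
    by (cases "k \<in> Atilde")
      (auto elim: Atilde_cases simp: coords_def Ec_uminus[OF assms] embed_outside Ec_outside[OF assms])
qed

lemma finsupp_Ec: "\<Phi> \<in> Ec l1 l2 n2 \<Longrightarrow> finsupp (real_of_int l1) \<Phi>"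
  using supp_Ec finite_Atilde Atilde_subset_circ by (meson finite_subset finsupp_def order_trans)

lemma act_in_Ec:
  assumes g: "orthogonal_transformation g" and \<Phi>: "\<Phi> \<in> Ec l1 l2 n2"
    and into: "g ` supp \<Phi> \<subseteq> Atilde"
  shows "act g \<Phi> \<in> Ec l1 l2 n2"
proof -
  have "act g \<Phi> k = 0" if "k \<notin> Atilde" for k
  proof (rule ccontr)
    assume "act g \<Phi> k \<noteq> 0"
    then have "g (inv g k) \<in> Atilde"
      using into by (auto simp: act_def supp_def)
    then show False
      using that surj_f_inv_f[OF orthogonal_transformation_surj[OF g]] by simp
  qed
  moreover have "inv g (- k) = - inv g k" for k
    using orthogonal_transformation_inv[OF g] by (simp add: linear_neg orthogonal_transformation_linear)
  ultimately show ?thesis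
    using Ec_uminus[OF \<Phi>] by (auto simp: Ec_def Atilde_def act_def)
qed

lemma transl_in_Ec: "\<Phi> \<in> Ec l1 l2 n2 \<Longrightarrow> transl s t \<Phi> \<in> Ec l1 l2 n2"
  by (auto simp: Ec_def transl_apply plane_wave_uminus)

lemma restrict_in_Ec:
  assumes "\<Phi> \<in> Ec l1 l2 n2" and "\<And>x. x \<in> T \<Longrightarrow> - x \<in> T"
  shows "(\<lambda>k. if k \<in> T then \<Phi> k else 0) \<in> Ec l1 l2 n2"
proof -
  have "- k \<in> T \<longleftrightarrow> k \<in> T" for k
    using assms(2) by (metis minus_minus)
  then show ?thesis
    using assms(1) by (auto simp: Ec_def)
qed

definition mset_of_exps :: "(6 \<Rightarrow> nat) \<Rightarrow> (6 \<Rightarrow> nat) \<Rightarrow> (real^2) multiset" where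
  "mset_of_exps \<alpha> \<beta> = (\<Sum>i\<in>UNIV. replicate_mset (\<alpha> i) (w i) + replicate_mset (\<beta> i) (- w i))"

definition exps_of_mset :: "(real^2) multiset \<Rightarrow> (6 \<Rightarrow> nat) \<times> (6 \<Rightarrow> nat)" where
  "exps_of_mset M = ((\<lambda>i. count M (w i)), (\<lambda>i. count M (- w i)))"

lemma count_mset_of_exps:
  "count (mset_of_exps \<alpha> \<beta>) (w j) = \<alpha> j"
  "count (mset_of_exps \<alpha> \<beta>) (- w j) = \<beta> j"
  "k \<notin> Atilde \<Longrightarrow> count (mset_of_exps \<alpha> \<beta>) k = 0"
  by (auto simp: mset_of_exps_def count_sum Atilde_def)

lemma exps_of_mset_of_exps [simp]: "exps_of_mset (mset_of_exps \<alpha> \<beta>) = (\<alpha>, \<beta>)"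
  by (simp add: exps_of_mset_def count_mset_of_exps)

lemma mset_of_exps_of_mset:
  assumes "set_mset M \<subseteq> Atilde"
  shows "case_prod mset_of_exps (exps_of_mset M) = M"
proof (rule multiset_eqI)
  fix k
  show "count (case_prod mset_of_exps (exps_of_mset M)) k = count M k"
    using assms by (cases "k \<in> Atilde")
      (auto elim: Atilde_cases simp: exps_of_mset_def count_mset_of_exps not_in_iff)
qed

lemma size_mset_of_exps: "size (mset_of_exps \<alpha> \<beta>) = (\<Sum>i\<in>UNIV. \<alpha> i) + (\<Sum>i\<in>UNIV. \<beta> i)"
  by (simp add: mset_of_exps_def sum.distrib)

lemma exps_of_mset_in_exps_of_degree:
  assumes "M \<in> msets_in Atilde p"
  shows "exps_of_mset M \<in> exps_of_degree p"
proof -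
  have "size (case_prod mset_of_exps (exps_of_mset M)) = p"
    using assms by (simp add: msets_in_def mset_of_exps_of_mset)
  then show ?thesis
    by (simp add: exps_of_degree_def size_mset_of_exps case_prod_unfold)
qed

lemma bij_betw_mset_of_exps:
  "bij_betw (case_prod mset_of_exps) (exps_of_degree p) (msets_in Atilde p)"
proof (rule bij_betw_byWitness[where f' = exps_of_mset])
  have set: "set_mset (mset_of_exps \<alpha> \<beta>) \<subseteq> Atilde" for \<alpha> \<beta>
    using count_mset_of_exps(3) by (auto simp: not_in_iff[symmetric])
  show "\<forall>e\<in>exps_of_degree p. exps_of_mset (case_prod mset_of_exps e) = e"
    by auto
  show "\<forall>M\<in>msets_in Atilde p. case_prod mset_of_exps (exps_of_mset M) = M"
    by (simp add: msets_in_def mset_of_exps_of_mset)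
  show "case_prod mset_of_exps ` exps_of_degree p \<subseteq> msets_in Atilde p"
    using set by (auto simp: msets_in_def exps_of_degree_def size_mset_of_exps)
  show "exps_of_mset ` msets_in Atilde p \<subseteq> exps_of_degree p"
    using exps_of_mset_in_exps_of_degree by blast
qed

lemma finite_exps_of_degree: "finite (exps_of_degree p :: ((6 \<Rightarrow> nat) \<times> (6 \<Rightarrow> nat)) set)"
  using bij_betw_finite[OF bij_betw_mset_of_exps] finite_msets_in[OF finite_Atilde] by blast

lemma monomial_embed_mset_of_exps:
  "monomial (emb x) (mset_of_exps \<alpha> \<beta>) = (\<Prod>i\<in>UNIV. x$i ^ \<alpha> i * cnj (x$i) ^ \<beta> i)"
  by (simp add: mset_of_exps_def monomial_sum) (simp add: monomial_def)

lemma sum_exps_eq_sum_msets: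
  "(\<Sum>(\<alpha>, \<beta>)\<in>exps_of_degree p. f (mset_of_exps \<alpha> \<beta>) * (\<Prod>i\<in>UNIV. x$i ^ \<alpha> i * cnj (x$i) ^ \<beta> i))
     = (\<Sum>M\<in>msets_in Atilde p. f M * monomial (emb x) M)"
  using sum.reindex_bij_betw[OF bij_betw_mset_of_exps, of "\<lambda>M. f M * monomial (emb x) M" p]
  by (simp add: case_prod_unfold monomial_embed_mset_of_exps)

end

section \<open>The coefficients of Ft\<close>

definition rotation_compatible :: "int \<Rightarrow> int \<Rightarrow> int \<Rightarrow> (complex^6 \<Rightarrow> complex^6) \<Rightarrow> bool" where
  "rotation_compatible l1 l2 n2 G \<longleftrightarrow>
     (\<forall>\<theta> :: real. \<forall>\<Phi>\<in>Ec l1 l2 n2. act (rot \<theta>) \<Phi> \<in> Ec l1 l2 n2 \<longrightarrow>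
        act (rot \<theta>) (embed l1 l2 n2 (G (coords l1 l2 n2 \<Phi>)))
          = embed l1 l2 n2 (G (coords l1 l2 n2 (act (rot \<theta>) \<Phi>))))"

context wave_vectors
begin

lemma coeffs_unique:
  assumes T: "\<And>x. x \<in> T \<Longrightarrow> - x \<in> T"
    and zero: "\<And>\<Phi>. \<Phi> \<in> Ec l1 l2 n2 \<Longrightarrow> supp \<Phi> \<subseteq> T \<Longrightarrow>
                 (\<Sum>M\<in>msets_in (supp \<Phi>) p. a M * monomial \<Phi> M) = 0"
    and M: "M \<in> msets_in Atilde p" "set_mset M \<subseteq> T"
  shows "a M = 0"
proof -
  define a' where "a' M = (if set_mset M \<subseteq> T then a M else 0)" for M
  have zero': "(\<Sum>(\<alpha>, \<beta>)\<in>exps_of_degree p. a' (mset_of_exps \<alpha> \<beta>) * (\<Prod>i\<in>UNIV. x i ^ \<alpha> i * cnj (x i) ^ \<beta> i)) = 0"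
    for x :: "6 \<Rightarrow> complex"
  proof -
    \<comment> \<open>Restricted to the symmetric set T, the field emb x stays in E^c and loses exactly the
      monomials not supported in T.\<close>
    define \<Phi> where "\<Phi> = (\<lambda>k. if k \<in> T then emb (vec_lambda x) k else 0)"
    have \<Phi>: "\<Phi> \<in> Ec l1 l2 n2" "supp \<Phi> \<subseteq> T"
      using restrict_in_Ec[OF embed_in_Ec T] by (auto simp: \<Phi>_def supp_def)
    have "(\<Sum>(\<alpha>, \<beta>)\<in>exps_of_degree p. a' (mset_of_exps \<alpha> \<beta>) * (\<Prod>i\<in>UNIV. x i ^ \<alpha> i * cnj (x i) ^ \<beta> i))
        = (\<Sum>M\<in>msets_in Atilde p. a' M * monomial (emb (vec_lambda x)) M)"
      using sum_exps_eq_sum_msets[where f = a' and x = "vec_lambda x"] by simp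
    also have "\<dots> = (\<Sum>M\<in>msets_in Atilde p. a M * monomial \<Phi> M)"
      by (rule sum.cong) (simp_all add: a'_def \<Phi>_def monomial_restrict)
    also have "\<dots> = (\<Sum>M\<in>msets_in (supp \<Phi>) p. a M * monomial \<Phi> M)"
      using supp_Ec[OF \<Phi>(1)] by (rule sum_monomials_supp_subset[OF finite_Atilde, symmetric])
    also have "\<dots> = 0"
      using zero \<Phi> by blast
    finally show ?thesis .
  qed
  obtain \<alpha> \<beta> where M_exps: "exps_of_mset M = (\<alpha>, \<beta>)"
    by (cases "exps_of_mset M")
  have "(\<lambda>(\<alpha>, \<beta>). a' (mset_of_exps \<alpha> \<beta>)) (\<alpha>, \<beta>) = 0"
  proof (rule multi_conj_polyfun_eq_0[OF finite_exps_of_degree[of p]])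
    show "(\<alpha>, \<beta>) \<in> exps_of_degree p"
      using exps_of_mset_in_exps_of_degree[OF M(1)] M_exps by simp
  qed (use zero' in simp)
  then show ?thesis
    using M M_exps mset_of_exps_of_mset[of M] by (simp add: a'_def msets_in_def)
qed

lemma monomial_uminus:
  assumes "\<Phi> \<in> Ec l1 l2 n2"
  shows "cnj (monomial \<Phi> M) = monomial \<Phi> (image_mset uminus M)"
  using assms by (induction M) (auto simp: monomial_def Ec_uminus)

lemma rotation_compatible_if_E2_extension:
  assumes E2: "E2_equivariant (real_of_int l1) F"
    and F: "\<forall>\<Phi>\<in>Ec l1 l2 n2. F \<Phi> = emb (G (crd \<Phi>))"
  shows "rotation_compatible l1 l2 n2 G"
  unfolding rotation_compatible_def
proof (intro allI ballI impI)
  fix \<theta> :: real and \<Phi>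
  assume \<Phi>: "\<Phi> \<in> Ec l1 l2 n2" and rot\<Phi>: "act (rot \<theta>) \<Phi> \<in> Ec l1 l2 n2"
  have "F (act (rot \<theta>) \<Phi>) = act (rot \<theta>) (F \<Phi>)"
    using E2 finsupp_Ec[OF \<Phi>] orthogonal_transformation_rot by (simp add: E2_equivariant_def)
  then show "act (rot \<theta>) (emb (G (crd \<Phi>))) = emb (G (crd (act (rot \<theta>) \<Phi>)))"
    using F \<Phi> rot\<Phi> by simp
qed

end

locale Gamma_equivariant_poly = wave_vectors +
  fixes p :: nat and Ft :: "complex^6 \<Rightarrow> complex^6"
    and c :: "(6 \<Rightarrow> nat) \<Rightarrow> (6 \<Rightarrow> nat) \<Rightarrow> complex^6"
  assumes Ft_expansion:
      "\<And>x. Ft x = (\<Sum>(\<alpha>, \<beta>)\<in>exps_of_degree p. (\<Prod>i\<in>UNIV. x$i ^ \<alpha> i * cnj (x$i) ^ \<beta> i) *s c \<alpha> \<beta>)"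
    and Ft_Gamma_equivariant: "Gamma_equivariant l1 l2 n2 Ft"
begin

definition coeff_vec :: "(real^2) multiset \<Rightarrow> complex^6" where
  "coeff_vec M = case_prod c (exps_of_mset M)"

text \<open>At - w j the embedded field is the conjugate of coordinate j, and conjugating a monomial of
  a field in E^c negates its wave vectors.\<close>

definition Ft_coeff :: coeffs where
  "Ft_coeff k M =
     (if k \<in> range w then coeff_vec M $ inv w k
      else if - k \<in> range w then cnj (coeff_vec (image_mset uminus M) $ inv w (- k))
      else 0)"

lemma Ft_coords_expansion:
  assumes "\<Phi> \<in> Ec l1 l2 n2"
  shows "Ft (crd \<Phi>) $ j = (\<Sum>M\<in>msets_in Atilde p. coeff_vec M $ j * monomial \<Phi> M)"
proof -
  have "Ft (crd \<Phi>) $ j = (\<Sum>(\<alpha>, \<beta>)\<in>exps_of_degree p.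
      coeff_vec (mset_of_exps \<alpha> \<beta>) $ j * (\<Prod>i\<in>UNIV. crd \<Phi> $ i ^ \<alpha> i * cnj (crd \<Phi> $ i) ^ \<beta> i))"
    by (simp add: Ft_expansion coeff_vec_def case_prod_unfold mult.commute)
  also have "\<dots> = (\<Sum>M\<in>msets_in Atilde p. coeff_vec M $ j * monomial \<Phi> M)"
    using sum_exps_eq_sum_msets[where f = "\<lambda>M. coeff_vec M $ j" and x = "crd \<Phi>"]
    by (simp add: embed_coords[OF assms])
  finally show ?thesis .
qed

lemma embed_Ft_eq_poly_of_coeffs:
  assumes \<Phi>: "\<Phi> \<in> Ec l1 l2 n2"
  shows "emb (Ft (crd \<Phi>)) = poly_of_coeffs p Ft_coeff \<Phi>"
proof
  fix k
  have "emb (Ft (crd \<Phi>)) k = (\<Sum>M\<in>msets_in Atilde p. Ft_coeff k M * monomial \<Phi> M)"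
  proof (cases "k \<in> Atilde")
    case True
    then show ?thesis
    proof (cases rule: Atilde_cases)
      case (1 j)
      then show ?thesis
        by (simp add: Ft_coords_expansion[OF \<Phi>] Ft_coeff_def inv_f_f[OF inj_wvec])
    next
      case (2 j)
      have "emb (Ft (crd \<Phi>)) k = (\<Sum>M\<in>msets_in Atilde p. cnj (coeff_vec M $ j) * monomial \<Phi> (image_mset uminus M))"
        by (simp add: 2 Ft_coords_expansion[OF \<Phi>] monomial_uminus[OF \<Phi>])
      also have "\<dots> = (\<Sum>M\<in>msets_in Atilde p. cnj (coeff_vec (image_mset uminus M) $ j) * monomial \<Phi> M)"
        by (rule sum.reindex_bij_witness[where i = "image_mset uminus" and j = "image_mset uminus"])
          (auto simp: msets_in_def multiset.map_comp comp_def)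
      also have "\<dots> = (\<Sum>M\<in>msets_in Atilde p. Ft_coeff k M * monomial \<Phi> M)"
        by (simp add: 2 Ft_coeff_def image_iff inv_f_f[OF inj_wvec])
      finally show ?thesis .
    qed
  next
    case False
    have "range w \<subseteq> Atilde"
      by (simp add: Atilde_def)
    with False have "k \<notin> range w" and "- k \<notin> range w"
      using uminus_in_Atilde[of k] by blast+
    then have "Ft_coeff k M = 0" for M
      by (simp add: Ft_coeff_def)
    with False show ?thesis
      by (simp add: embed_outside)
  qed
  also have "\<dots> = poly_of_coeffs p Ft_coeff \<Phi> k"
    unfolding poly_of_coeffs_def using supp_Ec[OF \<Phi>]
    by (rule sum_monomials_supp_subset[OF finite_Atilde, symmetric])
  finally show "emb (Ft (crd \<Phi>)) k = poly_of_coeffs p Ft_coeff \<Phi> k" .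
qed

lemma Ft_coeff_transfer:
  assumes g: "orthogonal_transformation g"
    and T: "\<And>x. x \<in> T \<Longrightarrow> - x \<in> T" and gT: "\<And>x. x \<in> T \<Longrightarrow> g x \<in> Atilde"
    and equivariant: "\<And>\<Phi>. \<Phi> \<in> Ec l1 l2 n2 \<Longrightarrow> supp \<Phi> \<subseteq> T \<Longrightarrow>
                         act g (emb (Ft (crd \<Phi>))) = emb (Ft (crd (act g \<Phi>)))"
    and M: "M \<in> msets_in Atilde p" "set_mset M \<subseteq> T"
  shows "Ft_coeff (g k) (image_mset g M) = Ft_coeff k M"
proof -
  have "(\<Sum>M\<in>msets_in (supp \<Phi>) p. (Ft_coeff (g k) (image_mset g M) - Ft_coeff k M) * monomial \<Phi> M) = 0"
    if \<Phi>: "\<Phi> \<in> Ec l1 l2 n2" and "supp \<Phi> \<subseteq> T" for \<Phi>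
  proof -
    have g\<Phi>: "act g \<Phi> \<in> Ec l1 l2 n2"
      using act_in_Ec[OF g \<Phi>] gT \<open>supp \<Phi> \<subseteq> T\<close> by blast
    have "(\<Sum>M\<in>msets_in (supp \<Phi>) p. Ft_coeff (g k) (image_mset g M) * monomial \<Phi> M)
        = poly_of_coeffs p Ft_coeff (act g \<Phi>) (g k)"
      by (simp add: poly_of_coeffs_def sum_monomials_act[OF orthogonal_transformation_bij[OF g]])
    also have "\<dots> = act g (emb (Ft (crd \<Phi>))) (g k)"
      by (simp add: embed_Ft_eq_poly_of_coeffs[OF g\<Phi>] equivariant[OF that])
    also have "\<dots> = (\<Sum>M\<in>msets_in (supp \<Phi>) p. Ft_coeff k M * monomial \<Phi> M)"
      using orthogonal_transformation_inj[OF g]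
      by (simp add: act_def embed_Ft_eq_poly_of_coeffs[OF \<Phi>] poly_of_coeffs_def)
    finally show ?thesis
      by (simp add: algebra_simps sum_subtractf)
  qed
  then have "Ft_coeff (g k) (image_mset g M) - Ft_coeff k M = 0"
    using coeffs_unique[OF T _ M, where a = "\<lambda>M. Ft_coeff (g k) (image_mset g M) - Ft_coeff k M"]
    by blast
  then show ?thesis
    by simp
qed

lemma embed_Ft_gamma1:
  assumes \<Phi>: "\<Phi> \<in> Ec l1 l2 n2"
  shows "act gamma1 (emb (Ft (crd \<Phi>))) = emb (Ft (crd (act gamma1 \<Phi>)))"
proof -
  have "Ft (crd (act gamma1 (emb (crd \<Phi>)))) = crd (act gamma1 (emb (Ft (crd \<Phi>))))"
    using Ft_Gamma_equivariant by (simp add: Gamma_equivariant_def)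
  then have "Ft (crd (act gamma1 \<Phi>)) = crd (act gamma1 (emb (Ft (crd \<Phi>))))"
    by (simp add: embed_coords[OF \<Phi>])
  moreover have "act gamma1 (emb (Ft (crd \<Phi>))) \<in> Ec l1 l2 n2"
    using supp_Ec[OF embed_in_Ec] gamma1_in_Atilde
    by (intro act_in_Ec[OF orthogonal_transformation_gamma1 embed_in_Ec]) blast
  ultimately show ?thesis
    by (simp add: embed_coords)
qed

lemma embed_Ft_transl:
  assumes \<Phi>: "\<Phi> \<in> Ec l1 l2 n2"
  shows "emb (Ft (crd (transl s t \<Phi>))) = transl s t (emb (Ft (crd \<Phi>)))"
proof -
  have "Ft (crd (transl s t (emb (crd \<Phi>)))) = crd (transl s t (emb (Ft (crd \<Phi>))))"
    using Ft_Gamma_equivariant by (simp add: Gamma_equivariant_def)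
  then have "Ft (crd (transl s t \<Phi>)) = crd (transl s t (emb (Ft (crd \<Phi>))))"
    by (simp add: embed_coords[OF \<Phi>])
  then show ?thesis
    by (simp add: embed_coords transl_in_Ec[OF embed_in_Ec])
qed

lemma Ft_coeff_gamma1:
  "M \<in> msets_in Atilde p \<Longrightarrow> Ft_coeff (gamma1 k) (image_mset gamma1 M) = Ft_coeff k M"
  by (rule Ft_coeff_transfer[OF orthogonal_transformation_gamma1, where T = Atilde])
    (auto simp: gamma1_in_Atilde embed_Ft_gamma1 msets_in_def)

lemma Ft_coeff_rot:
  assumes rot: "rotation_compatible l1 l2 n2 Ft"
    and M: "M \<in> msets_in Atilde p" "image_mset (rot \<theta>) M \<in> msets_in Atilde p"
  shows "Ft_coeff (rot \<theta> k) (image_mset (rot \<theta>) M) = Ft_coeff k M"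
proof (rule Ft_coeff_transfer[OF orthogonal_transformation_rot, where T = "{x \<in> Atilde. rot \<theta> x \<in> Atilde}"])
  show "- x \<in> {x \<in> Atilde. rot \<theta> x \<in> Atilde}" if "x \<in> {x \<in> Atilde. rot \<theta> x \<in> Atilde}" for x
    using that by simp
  show "act (rot \<theta>) (emb (Ft (crd \<Phi>))) = emb (Ft (crd (act (rot \<theta>) \<Phi>)))"
    if "\<Phi> \<in> Ec l1 l2 n2" and "supp \<Phi> \<subseteq> {x \<in> Atilde. rot \<theta> x \<in> Atilde}" for \<Phi>
  proof -
    have "act (rot \<theta>) \<Phi> \<in> Ec l1 l2 n2"
      using that by (intro act_in_Ec[OF orthogonal_transformation_rot]) auto
    then show ?thesis
      using rot that(1) by (simp add: rotation_compatible_def)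
  qed
qed (use M in \<open>auto simp: msets_in_def\<close>)

lemma O2_invariant_Ft_coeff:
  assumes rot: "rotation_compatible l1 l2 n2 Ft"
  shows "O2_invariant_on (msets_in Atilde p) Ft_coeff"
  unfolding O2_invariant_on_def
proof (intro allI impI)
  fix g :: "real^2 \<Rightarrow> real^2" and k M
  assume g: "orthogonal_transformation g" and M: "M \<in> msets_in Atilde p"
    and gM: "image_mset g M \<in> msets_in Atilde p"
  from g show "Ft_coeff (g k) (image_mset g M) = Ft_coeff k M"
  proof (cases rule: orthogonal_transformation_plane_cases)
    case (1 \<theta>)
    then show ?thesis
      using Ft_coeff_rot[OF rot M] gM by simp
  next
    case (2 \<theta>)
    have "image_mset gamma1 M \<in> msets_in Atilde p"
      using M gamma1_in_Atilde by (auto simp: msets_in_def)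
    then have "Ft_coeff (g k) (image_mset g M) = Ft_coeff (gamma1 k) (image_mset gamma1 M)"
      using Ft_coeff_rot[OF rot, of "image_mset gamma1 M" \<theta> "gamma1 k"] gM
      by (simp add: 2 multiset.map_comp)
    also have "\<dots> = Ft_coeff k M"
      by (rule Ft_coeff_gamma1[OF M])
    finally show ?thesis .
  qed
qed

lemma momentum_conserving_Ft_coeff: "momentum_conserving_on (msets_in Atilde p) Ft_coeff"
  unfolding momentum_conserving_on_def
proof (intro allI impI)
  fix k M
  assume M: "M \<in> msets_in Atilde p" and nz: "Ft_coeff k M \<noteq> 0"
  have "Ft_coeff k M * (plane_wave s t (sum_mset M) - plane_wave s t k) = 0" for s t
  proof (rule coeffs_unique[where T = UNIV, OF _ _ M])
    fix \<Phi>
    assume \<Phi>: "\<Phi> \<in> Ec l1 l2 n2"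
    have "(\<Sum>M\<in>msets_in (supp \<Phi>) p. Ft_coeff k M * plane_wave s t (sum_mset M) * monomial \<Phi> M)
        = emb (Ft (crd (transl s t \<Phi>))) k"
      unfolding embed_Ft_eq_poly_of_coeffs[OF transl_in_Ec[OF \<Phi>]] poly_of_coeffs_def sum_monomials_transl ..
    also have "\<dots> = (\<Sum>M\<in>msets_in (supp \<Phi>) p. plane_wave s t k * Ft_coeff k M * monomial \<Phi> M)"
      by (simp add: embed_Ft_transl[OF \<Phi>] transl_apply embed_Ft_eq_poly_of_coeffs[OF \<Phi>]
          poly_of_coeffs_def sum_distrib_left mult.assoc)
    finally show "(\<Sum>M\<in>msets_in (supp \<Phi>) p. Ft_coeff k M * (plane_wave s t (sum_mset M) - plane_wave s t k) * monomial \<Phi> M) = 0"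
      by (simp add: algebra_simps sum_subtractf)
  qed auto
  then have "plane_wave s t (sum_mset M) = plane_wave s t k" for s t
    using nz by simp
  then show "sum_mset M = k"
    by (rule plane_wave_inject)
qed

lemma E2_extension_exists:
  assumes rot: "rotation_compatible l1 l2 n2 Ft"
  shows "\<exists>F. poly_vf (real_of_int l1) p F \<and> E2_equivariant (real_of_int l1) F \<and>
             (\<forall>\<Phi>\<in>Ec l1 l2 n2. F \<Phi> = emb (Ft (crd \<Phi>)))"
proof (intro exI conjI)
  define C where "C = orbit_extension (msets_in Atilde p) Ft_coeff"
  have inv: "O2_invariant_on (msets_in Atilde p) Ft_coeff"
    by (rule O2_invariant_Ft_coeff[OF rot])
  show "poly_vf (real_of_int l1) p (vf_of_coeffs (real_of_int l1) p C)"
    by (rule poly_vf_vf_of_coeffs)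
  show "E2_equivariant (real_of_int l1) (vf_of_coeffs (real_of_int l1) p C)"
    unfolding C_def using inv momentum_conserving_Ft_coeff
    by (intro E2_equivariant_vf_of_coeffs O2_invariant_orbit_extension momentum_conserving_orbit_extension)
  show "\<forall>\<Phi>\<in>Ec l1 l2 n2. vf_of_coeffs (real_of_int l1) p C \<Phi> = emb (Ft (crd \<Phi>))"
  proof (intro ballI ext)
    fix \<Phi> k
    assume \<Phi>: "\<Phi> \<in> Ec l1 l2 n2"
    have "M \<in> msets_in Atilde p" if "M \<in> msets_in (supp \<Phi>) p" for M
      using that supp_Ec[OF \<Phi>] by (auto simp: msets_in_def)
    then have "poly_of_coeffs p C \<Phi> = poly_of_coeffs p Ft_coeff \<Phi>"
      by (auto simp: poly_of_coeffs_def C_def orbit_extension_on[OF inv] intro!: sum.cong)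
    moreover have "emb (Ft (crd \<Phi>)) k = 0" if "k \<notin> circ (real_of_int l1)"
      using that Atilde_subset_circ by (auto intro: embed_outside)
    ultimately show "vf_of_coeffs (real_of_int l1) p C \<Phi> k = emb (Ft (crd \<Phi>)) k"
      by (simp add: vf_of_coeffs_def embed_Ft_eq_poly_of_coeffs[OF \<Phi>])
  qed
qed

end

theorem mainTheorem18:
  fixes l1 l2 n2 :: int and p :: nat and Ft :: "complex^6 \<Rightarrow> complex^6"
  assumes "l1 > l2" and "l2 > n2" and "n2 > 0" and "l1^2 = l2^2 + n2^2"
    and "hom_poly_map p Ft"
    and "Gamma_equivariant l1 l2 n2 Ft"
  shows "(\<exists>F. poly_vf (real_of_int l1) p F \<and> E2_equivariant (real_of_int l1) F \<and>
             (\<forall>\<Phi>\<in>Ec l1 l2 n2. F \<Phi> = embed l1 l2 n2 (Ft (coords l1 l2 n2 \<Phi>))))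
         \<longleftrightarrow>
         (\<forall>\<theta> :: real. \<forall>\<Phi>\<in>Ec l1 l2 n2. act (rot \<theta>) \<Phi> \<in> Ec l1 l2 n2 \<longrightarrow>
             act (rot \<theta>) (embed l1 l2 n2 (Ft (coords l1 l2 n2 \<Phi>)))
               = embed l1 l2 n2 (Ft (coords l1 l2 n2 (act (rot \<theta>) \<Phi>))))"
proof -
  interpret wave_vectors l1 l2 n2
    using assms(1-4) by unfold_locales
  obtain c where "\<And>x. Ft x = (\<Sum>(\<alpha>, \<beta>)\<in>exps_of_degree p. (\<Prod>i\<in>UNIV. x$i ^ \<alpha> i * cnj (x$i) ^ \<beta> i) *s c \<alpha> \<beta>)"
    using assms(5) by (auto simp: hom_poly_map_def exps_of_degree_def)
  then interpret Gamma_equivariant_poly l1 l2 n2 p Ft c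
    using assms(6) by unfold_locales
  show ?thesis
    using rotation_compatible_if_E2_extension E2_extension_exists
    unfolding rotation_compatible_def by blast
qed

end
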